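(* Let $(Q,\le_Q)$ be a non-empty quasi-order. The map $f:\mathsf{T_f}(Q)\to i^F_{\omega^\omega}(Q)$ is an order-embedding: for all $\sigma,\tau\in\mathsf{T_f}(Q)$, $\sigma\le_T\tau$ iff $f(\sigma)\preceq f(\tau)$.
   Context: Trees: $\mathsf{T_f}(Q)$ is the smallest class containing the leaf $\cdot q$ for each $q\in Q$, and containing $\cdot(\tau_0,\dots,\tau_{k-1})$ (an unlabelled root whose children are the $\tau_i$) for every finite set $\{\tau_0,\dots,\tau_{k-1}\}\subseteq\mathsf{T_f}(Q)$ with $k\ge1$. Its order $\le_T$ is defined recursively: - $\cdot x\le_T\cdot y$ iff $x\le_Q y$; - $\cdot x\le_T\cdot(\tau_j)_{j<l}$ iff $\cdot x\le_T\tau_j$ for some $j$; - $\cdot(\sigma_i)_{i<k}\le_T\cdot(\tau_j)_{j<l}$ iff every $\sigma_i$ is $\le_T$ some $\tau_j$; - a non-leaf tree is never $\le_T$ a leaf. Sequences: a transfinite sequence over $Q$ of length $\alpha$ (with $\alpha\ne0$) is a function $\sigma:\alpha\to Q$. Define $\sigma\preceq\tau$ if there is a strictly increasing $f:|\sigma|\to|\tau|$ with $\sigma(i)\le_Q\tau(f(i))$ for all $i$. The concatenation $\sigma+\tau$ places a copy of $\tau$ after $\sigma$. The sequence $\rho^\omega$ has length $|\rho|\cdot\omega$ and value $\rho^\omega(|\rho|\cdot\delta+\iota)=\rho(\iota)$ for $\delta<\omega$ and $\iota<|\rho|$. The sequence $\sigma$ is indecomposable if it embeds into each of its proper tails $i\mapsto\sigma(\delta+i)$,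 $0<\delta<|\sigma|$. $i^F_{\omega^\omega}(Q)$ is the set of indecomposable sequences over $Q$ with finite range and length $<\omega^\omega$, ordered by $\preceq$. The map $f$ is defined recursively: - $f(\cdot q)=\langle q\rangle$, the length-one sequence; - $f(\cdot(\tau_0,\dots,\tau_{k-1}))=(f(\tau_0)+f(\tau_1)+\cdots+f(\tau_{k-1}))^\omega$. A tree of height $n$ is sent to a sequence of length $\omega^n$ whose range is the set of leaf labels, so $f$ indeed lands in $i^F_{\omega^\omega}(Q)$. *)

theory Defs
  imports Main
begin

text \<open>Trees with leaves labelled in 'q; an inner node has a non-empty finite set of
  children, represented by a list which is required to be non-empty and duplicate-free
  (predicate wf_tree).  The list order is an arbitrary enumeration of the children.\<close>

datatype 'q tree = Leaf 'q | Node "'q tree list"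

fun wf_tree :: "'q tree \<Rightarrow> bool" where
  "wf_tree (Leaf q) = True"
| "wf_tree (Node ts) = (ts \<noteq> [] \<and> distinct ts \<and> (\<forall>t\<in>set ts. wf_tree t))"

fun tree_le :: "('q \<Rightarrow> 'q \<Rightarrow> bool) \<Rightarrow> 'q tree \<Rightarrow> 'q tree \<Rightarrow> bool" where
  "tree_le le (Leaf x) (Leaf y) = le x y"
| "tree_le le (Leaf x) (Node ts) = (\<exists>t\<in>set ts. tree_le le (Leaf x) t)"
| "tree_le le (Node ss) (Node ts) = (\<forall>s\<in>set ss. \<exists>t\<in>set ts. tree_le le s t)"
| "tree_le le (Node ss) (Leaf y) = False"

text \<open>A transfinite sequence is represented up to order isomorphism of its domain:
  a well-ordered set of positions (a set of lists of naturals under the lexicographic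
  order pos_less) together with a labelling of the positions.  Its length is the
  order type of the position set.\<close>

type_synonym 'q tseq = "nat list set \<times> (nat list \<Rightarrow> 'q)"

definition pos_less :: "nat list \<Rightarrow> nat list \<Rightarrow> bool" where
  "pos_less xs ys \<longleftrightarrow> (xs, ys) \<in> lexord {(u, v). u < v}"

definition seq_emb :: "('q \<Rightarrow> 'q \<Rightarrow> bool) \<Rightarrow> 'q tseq \<Rightarrow> 'q tseq \<Rightarrow> bool" where
  "seq_emb le \<sigma> \<tau> \<longleftrightarrow> (\<exists>g. g ` fst \<sigma> \<subseteq> fst \<tau>
      \<and> (\<forall>i\<in>fst \<sigma>. \<forall>j\<in>fst \<sigma>. pos_less i j \<longrightarrow> pos_less (g i) (g j))
      \<and> (\<forall>i\<in>fst \<sigma>. le (snd \<sigma> i) (snd \<tau> (g i))))"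

definition single_seq :: "'q \<Rightarrow> 'q tseq" where
  "single_seq q = ({[]}, \<lambda>_. q)"

text \<open>Concatenation of a finite list of sequences: the k-th summand occupies the
  positions k # i, placed after all earlier summands.\<close>
definition concat_seqs :: "'q tseq list \<Rightarrow> 'q tseq" where
  "concat_seqs ss = ({k # i | k i. k < length ss \<and> i \<in> fst (ss ! k)},
                     \<lambda>x. snd (ss ! hd x) (tl x))"

text \<open>rho^omega: the delta-th copy of rho occupies the positions delta # i.\<close>
definition omega_seq :: "'q tseq \<Rightarrow> 'q tseq" where
  "omega_seq \<rho> = ({d # i | d i. i \<in> fst \<rho>}, \<lambda>x. snd \<rho> (tl x))"

fun tree_seq :: "'q tree \<Rightarrow> 'q tseq" where
  "tree_seq (Leaf q) = single_seq q"
| "tree_seq (Node ts) = omega_seq (concat_seqs (map tree_seq ts))"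

end

theory Submission
  imports Defs
begin

text \<open>Every sequence f(t) is indecomposable: shifting positions by whole copies of an
  \<open>\<omega>\<close>-power embeds it into each of its tails, with labels preserved.  Consequently an
  indecomposable sequence embedded into a finite sum embeds into one summand: restrict the
  embedding to the tail starting at a position sent into the last summand that is reached.
  For inner nodes, the first copy of \<open>\<Sum>\<^sub>i f(\<sigma>\<^sub>i)\<close> lies below the second one,
  so its image meets only finitely many copies of \<open>\<Sum>\<^sub>j f(\<tau>\<^sub>j)\<close>, and each \<open>f(\<sigma>\<^sub>i)\<close>
  ends up inside a single \<open>f(\<tau>\<^sub>j)\<close>.  Conversely, summand i of copy d is sent into
  summand j(i) of copy d * k + i.\<close>

lemma pos_less_Cons_Cons [simp]:
  "pos_less (a # xs) (b # ys) \<longleftrightarrow> a < b \<or> a = b \<and> pos_less xs ys"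
  by (auto simp: pos_less_def)

lemma not_pos_less_Nil [simp]: "\<not> pos_less xs []"
  by (simp add: pos_less_def)

lemma mem_omega_seq: "x \<in> fst (omega_seq \<rho>) \<longleftrightarrow> (\<exists>d q. x = d # q \<and> q \<in> fst \<rho>)"
  by (auto simp: omega_seq_def)

lemma snd_omega_seq [simp]: "snd (omega_seq \<rho>) (d # q) = snd \<rho> q"
  by (simp add: omega_seq_def)

lemma mem_concat_seqs:
  "x \<in> fst (concat_seqs \<rho>s) \<longleftrightarrow> (\<exists>k q. x = k # q \<and> k < length \<rho>s \<and> q \<in> fst (\<rho>s ! k))"
  by (auto simp: concat_seqs_def)

lemma snd_concat_seqs [simp]: "snd (concat_seqs \<rho>s) (k # q) = snd (\<rho>s ! k) q"
  by (simp add: concat_seqs_def)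

lemma fst_omega_seq_eq_empty [simp]: "fst (omega_seq \<rho>) = {} \<longleftrightarrow> fst \<rho> = {}"
  by (auto simp: omega_seq_def)

lemma fst_concat_seqs_eq_empty [simp]:
  "fst (concat_seqs \<rho>s) = {} \<longleftrightarrow> (\<forall>\<rho>\<in>set \<rho>s. fst \<rho> = {})"
proof -
  have "fst (concat_seqs \<rho>s) \<noteq> {} \<longleftrightarrow> (\<exists>k<length \<rho>s. fst (\<rho>s ! k) \<noteq> {})"
    unfolding ex_in_conv[symmetric] mem_concat_seqs by auto
  then show ?thesis by (metis in_set_conv_nth)
qed

lemma fst_single_seq [simp]: "fst (single_seq x) = {[]}"
  and snd_single_seq [simp]: "snd (single_seq x) p = x"
  by (simp_all add: single_seq_def)

definition seq_emb_via ::
    "('q \<Rightarrow> 'q \<Rightarrow> bool) \<Rightarrow> 'q tseq \<Rightarrow> 'q tseq \<Rightarrow> (nat list \<Rightarrow> nat list) \<Rightarrow> bool" where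
  "seq_emb_via R \<sigma> \<tau> g \<longleftrightarrow> g ` fst \<sigma> \<subseteq> fst \<tau>
      \<and> (\<forall>i\<in>fst \<sigma>. \<forall>j\<in>fst \<sigma>. pos_less i j \<longrightarrow> pos_less (g i) (g j))
      \<and> (\<forall>i\<in>fst \<sigma>. R (snd \<sigma> i) (snd \<tau> (g i)))"

lemma seq_emb_iff_via: "seq_emb R \<sigma> \<tau> \<longleftrightarrow> (\<exists>g. seq_emb_via R \<sigma> \<tau> g)"
  by (simp add: seq_emb_def seq_emb_via_def)

lemma seq_emb_via_comp:
  "seq_emb_via R \<rho> \<sigma> g \<Longrightarrow> seq_emb_via S \<sigma> \<tau> h \<Longrightarrow> seq_emb_via (R OO S) \<rho> \<tau> (h \<circ> g)"
  unfolding seq_emb_via_def by (auto simp: image_subset_iff)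

lemma seq_emb_via_empty: "fst \<sigma> = {} \<Longrightarrow> seq_emb_via R \<sigma> \<tau> g"
  by (simp add: seq_emb_via_def)

lemma seq_emb_empty_target: "seq_emb R \<sigma> \<tau> \<Longrightarrow> fst \<tau> = {} \<Longrightarrow> fst \<sigma> = {}"
  by (auto simp: seq_emb_def)

definition seq_summand :: "'q tseq \<Rightarrow> nat \<Rightarrow> 'q tseq" where
  "seq_summand \<tau> k = ({q. k # q \<in> fst \<tau>}, \<lambda>q. snd \<tau> (k # q))"

lemma seq_summand_omega_seq [simp]: "seq_summand (omega_seq \<rho>) d = \<rho>"
  by (simp add: seq_summand_def mem_omega_seq)

lemma seq_summand_concat_seqs:
  "k < length \<rho>s \<Longrightarrow> seq_summand (concat_seqs \<rho>s) k = \<rho>s ! k"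
  by (simp add: seq_summand_def mem_concat_seqs)

lemma fst_seq_summand_concat_seqs_beyond:
  "length \<rho>s \<le> k \<Longrightarrow> fst (seq_summand (concat_seqs \<rho>s) k) = {}"
  by (simp add: seq_summand_def mem_concat_seqs)

definition seq_tail :: "'q tseq \<Rightarrow> nat list \<Rightarrow> 'q tseq" where
  "seq_tail \<rho> p = ({x \<in> fst \<rho>. x = p \<or> pos_less p x}, snd \<rho>)"

definition indecomposable :: "'q tseq \<Rightarrow> bool" where
  "indecomposable \<rho> \<longleftrightarrow> (\<forall>p\<in>fst \<rho>. seq_emb (=) \<rho> (seq_tail \<rho> p))"

lemma indecomposable_single_seq: "indecomposable (single_seq x)"
  unfolding indecomposable_def seq_emb_iff_via
  by (auto simp: seq_emb_via_def seq_tail_def intro: exI[of _ id])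

lemma indecomposable_omega_seq: "indecomposable (omega_seq \<rho>)"
  unfolding indecomposable_def seq_emb_iff_via
proof
  fix p assume "p \<in> fst (omega_seq \<rho>)"
  then obtain d q where "p = d # q" by (auto simp: mem_omega_seq)
  then show "\<exists>h. seq_emb_via (=) (omega_seq \<rho>) (seq_tail (omega_seq \<rho>) p) h"
    by (intro exI[of _ "\<lambda>x. (hd x + d + 1) # tl x"])
      (auto simp: seq_emb_via_def seq_tail_def mem_omega_seq)
qed

lemma indecomposable_emb_summand:
  assumes indec: "indecomposable \<rho>" and g: "seq_emb_via R \<rho> \<tau> g"
    and bounded: "\<forall>x\<in>fst \<rho>. g x \<noteq> [] \<and> hd (g x) \<le> E"
  shows "\<exists>k. seq_emb R \<rho> (seq_summand \<tau> k)"
proof (cases "fst \<rho> = {}")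
  case True
  then show ?thesis unfolding seq_emb_iff_via using seq_emb_via_empty by blast
next
  case False
  define e where "e = Max ((hd \<circ> g) ` fst \<rho>)"
  have "(hd \<circ> g) ` fst \<rho> \<subseteq> {..E}"
    using bounded by auto
  then have heads_fin: "finite ((hd \<circ> g) ` fst \<rho>)"
    using finite_subset by blast
  have head_le: "hd (g x) \<le> e" if "x \<in> fst \<rho>" for x
    using heads_fin that by (auto simp: e_def)
  have "e \<in> (hd \<circ> g) ` fst \<rho>"
    using Max_in[OF heads_fin] False by (simp add: e_def)
  then obtain p where p: "p \<in> fst \<rho>" "hd (g p) = e" by auto
  obtain h where h: "seq_emb_via (=) \<rho> (seq_tail \<rho> p) h"
    using indec p(1) unfolding indecomposable_def seq_emb_iff_via by blast
  \<comment> \<open>past position p the image of g cannot leave the summand e, which is the last one it meets\<close>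
  have in_summand: "e # tl (g x) = g x" if "x \<in> fst (seq_tail \<rho> p)" for x
  proof -
    from that have x: "x \<in> fst \<rho>" "x = p \<or> pos_less p x" by (auto simp: seq_tail_def)
    obtain a u where gx: "g x = a # u" using bounded x(1) by (cases "g x") auto
    obtain v where gp: "g p = e # v" using bounded p by (cases "g p") auto
    have "g x = g p \<or> pos_less (g p) (g x)"
      using g x p(1) unfolding seq_emb_via_def by blast
    then have "e \<le> a" using gx gp by auto
    moreover have "a \<le> e" using head_le[OF x(1)] gx by simp
    ultimately show ?thesis using gx by simp
  qed
  have tail_sub: "fst (seq_tail \<rho> p) \<subseteq> fst \<rho>" by (auto simp: seq_tail_def)
  have "seq_emb_via R (seq_tail \<rho> p) (seq_summand \<tau> e) (tl \<circ> g)"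
    unfolding seq_emb_via_def seq_summand_def fst_conv snd_conv
  proof (intro conjI ballI impI subsetI)
    fix y assume "y \<in> (tl \<circ> g) ` fst (seq_tail \<rho> p)"
    then obtain x where x: "x \<in> fst (seq_tail \<rho> p)" "y = tl (g x)" by auto
    then have "g x \<in> fst \<tau>" using g tail_sub unfolding seq_emb_via_def by blast
    then show "y \<in> {q. e # q \<in> fst \<tau>}" using x in_summand by simp
  next
    fix x y assume x: "x \<in> fst (seq_tail \<rho> p)" and y: "y \<in> fst (seq_tail \<rho> p)"
      and "pos_less x y"
    then have "pos_less (g x) (g y)" using g tail_sub unfolding seq_emb_via_def by blast
    then have "pos_less (e # tl (g x)) (e # tl (g y))" using in_summand[OF x] in_summand[OF y] by simp
    then show "pos_less ((tl \<circ> g) x) ((tl \<circ> g) y)" by simp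
  next
    fix x assume x: "x \<in> fst (seq_tail \<rho> p)"
    then have "R (snd \<rho> x) (snd \<tau> (g x))" using g tail_sub unfolding seq_emb_via_def by blast
    then show "R (snd (seq_tail \<rho> p) x) (snd \<tau> (e # (tl \<circ> g) x))"
      using in_summand[OF x] by (simp add: seq_tail_def)
  qed
  from seq_emb_via_comp[OF h this] have "seq_emb_via R \<rho> (seq_summand \<tau> e) (tl \<circ> g \<circ> h)"
    by (simp add: eq_OO)
  then show ?thesis by (auto simp: seq_emb_iff_via)
qed

lemma mult_add_less_mult_add:
  fixes d d' i i' k :: nat
  assumes "d < d'" "i < k"
  shows "d * k + i < d' * k + i'"
proof -
  have "d * k + i < Suc d * k" using assms(2) by simp
  also have "\<dots> \<le> d' * k" using assms(1) by (intro mult_le_mono1) simp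
  finally show ?thesis by simp
qed

lemma seq_emb_omega_concat_seqs:
  assumes "\<forall>\<rho>\<in>set \<rho>s. \<exists>\<tau>\<in>set \<tau>s. seq_emb R \<rho> \<tau>"
  shows "seq_emb R (omega_seq (concat_seqs \<rho>s)) (omega_seq (concat_seqs \<tau>s))"
proof -
  define k where "k = length \<rho>s"
  have "\<forall>i<k. \<exists>j g. j < length \<tau>s \<and> seq_emb_via R (\<rho>s ! i) (\<tau>s ! j) g"
    using assms unfolding k_def seq_emb_iff_via by (metis in_set_conv_nth nth_mem)
  then obtain J G where JG: "\<And>i. i < k \<Longrightarrow> J i < length \<tau>s \<and> seq_emb_via R (\<rho>s ! i) (\<tau>s ! J i) (G i)"
    by metis
  define M where "M x = (hd x * k + hd (tl x)) # J (hd (tl x)) # G (hd (tl x)) (tl (tl x))" for x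
  have "seq_emb_via R (omega_seq (concat_seqs \<rho>s)) (omega_seq (concat_seqs \<tau>s)) M"
    unfolding seq_emb_via_def
  proof (intro conjI ballI impI subsetI)
    fix y assume "y \<in> M ` fst (omega_seq (concat_seqs \<rho>s))"
    then show "y \<in> fst (omega_seq (concat_seqs \<tau>s))"
      using JG by (fastforce simp: M_def k_def mem_omega_seq mem_concat_seqs seq_emb_via_def)
  next
    fix x y assume "x \<in> fst (omega_seq (concat_seqs \<rho>s))" "y \<in> fst (omega_seq (concat_seqs \<rho>s))"
      and xy: "pos_less x y"
    then obtain d i q d' i' q' where
      x: "x = d # i # q" "i < k" "q \<in> fst (\<rho>s ! i)" and
      y: "y = d' # i' # q'" "i' < k" "q' \<in> fst (\<rho>s ! i')"
      by (auto simp: k_def mem_omega_seq mem_concat_seqs)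
    from xy x y consider "d < d'" | "d = d'" "i < i'" | "d = d'" "i = i'" "pos_less q q'"
      by auto
    then show "pos_less (M x) (M y)"
    proof cases
      case 1
      then show ?thesis using x y mult_add_less_mult_add by (simp add: M_def)
    next
      case 3
      then show ?thesis using x y JG[of i] by (simp add: M_def seq_emb_via_def)
    qed (use x y in \<open>simp add: M_def\<close>)
  next
    fix x assume "x \<in> fst (omega_seq (concat_seqs \<rho>s))"
    then show "R (snd (omega_seq (concat_seqs \<rho>s)) x) (snd (omega_seq (concat_seqs \<tau>s)) (M x))"
      using JG by (fastforce simp: M_def k_def mem_omega_seq mem_concat_seqs seq_emb_via_def)
  qed
  then show ?thesis by (auto simp: seq_emb_iff_via)
qed

lemma emb_concat_seqs_into_summand:
  assumes "indecomposable \<rho>" "fst \<rho> \<noteq> {}" "seq_emb R \<rho> (concat_seqs \<tau>s)"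
  shows "\<exists>\<tau>\<in>set \<tau>s. seq_emb R \<rho> \<tau>"
proof -
  obtain g where g: "seq_emb_via R \<rho> (concat_seqs \<tau>s) g"
    using assms(3) by (auto simp: seq_emb_iff_via)
  then have "\<forall>x\<in>fst \<rho>. g x \<in> fst (concat_seqs \<tau>s)"
    unfolding seq_emb_via_def by blast
  then have "\<forall>x\<in>fst \<rho>. g x \<noteq> [] \<and> hd (g x) \<le> length \<tau>s"
    by (auto simp: mem_concat_seqs)
  then obtain j where j: "seq_emb R \<rho> (seq_summand (concat_seqs \<tau>s) j)"
    using indecomposable_emb_summand[OF assms(1) g] by blast
  have "j < length \<tau>s"
  proof (rule ccontr)
    assume "\<not> j < length \<tau>s"
    then have "fst (seq_summand (concat_seqs \<tau>s) j) = {}"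
      by (simp add: fst_seq_summand_concat_seqs_beyond)
    then show False using seq_emb_empty_target[OF j] assms(2) by blast
  qed
  with j show ?thesis by (auto simp: seq_summand_concat_seqs)
qed

lemma emb_omega_seq_bounded:
  assumes "indecomposable \<rho>" "seq_emb_via R \<rho> (omega_seq \<sigma>) g"
    and "\<forall>x\<in>fst \<rho>. pos_less (g x) b" "b \<in> fst (omega_seq \<sigma>)"
  shows "seq_emb R \<rho> \<sigma>"
proof -
  obtain E c where b: "b = E # c" using assms(4) by (auto simp: mem_omega_seq)
  have "\<forall>x\<in>fst \<rho>. g x \<noteq> [] \<and> hd (g x) \<le> E"
  proof
    fix x assume "x \<in> fst \<rho>"
    then have "g x \<in> fst (omega_seq \<sigma>)" "pos_less (g x) (E # c)"
      using assms(2,3) b unfolding seq_emb_via_def by blast+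
    then obtain d q where "g x = d # q" "pos_less (d # q) (E # c)"
      by (auto simp: mem_omega_seq)
    then show "g x \<noteq> [] \<and> hd (g x) \<le> E" by auto
  qed
  then obtain k where "seq_emb R \<rho> (seq_summand (omega_seq \<sigma>) k)"
    using indecomposable_emb_summand[OF assms(1,2)] by blast
  then show ?thesis by simp
qed

lemma seq_emb_omega_concat_seqs_iff:
  assumes "\<forall>\<rho>\<in>set \<rho>s. indecomposable \<rho> \<and> fst \<rho> \<noteq> {}"
  shows "seq_emb R (omega_seq (concat_seqs \<rho>s)) (omega_seq (concat_seqs \<tau>s))
    \<longleftrightarrow> (\<forall>\<rho>\<in>set \<rho>s. \<exists>\<tau>\<in>set \<tau>s. seq_emb R \<rho> \<tau>)"
proof
  assume "seq_emb R (omega_seq (concat_seqs \<rho>s)) (omega_seq (concat_seqs \<tau>s))"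
  then obtain g where g: "seq_emb_via R (omega_seq (concat_seqs \<rho>s)) (omega_seq (concat_seqs \<tau>s)) g"
    by (auto simp: seq_emb_iff_via)
  show "\<forall>\<rho>\<in>set \<rho>s. \<exists>\<tau>\<in>set \<tau>s. seq_emb R \<rho> \<tau>"
  proof
    fix \<rho> assume \<rho>: "\<rho> \<in> set \<rho>s"
    then obtain i where i: "i < length \<rho>s" "\<rho> = \<rho>s ! i" by (auto simp: in_set_conv_nth)
    obtain p where p: "p \<in> fst \<rho>" using assms \<rho> by auto
    define first_copy where "first_copy q = 0 # i # q" for q
    have "seq_emb_via (=) \<rho> (omega_seq (concat_seqs \<rho>s)) first_copy"
      using i by (auto simp: seq_emb_via_def first_copy_def mem_omega_seq mem_concat_seqs)
    from seq_emb_via_comp[OF this g]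
    have g_first: "seq_emb_via R \<rho> (omega_seq (concat_seqs \<tau>s)) (g \<circ> first_copy)"
      by (simp add: eq_OO)
    have second: "1 # i # p \<in> fst (omega_seq (concat_seqs \<rho>s))"
      using i p by (auto simp: mem_omega_seq mem_concat_seqs)
    have "\<forall>x\<in>fst \<rho>. pos_less ((g \<circ> first_copy) x) (g (1 # i # p))"
    proof
      fix x assume "x \<in> fst \<rho>"
      then have "first_copy x \<in> fst (omega_seq (concat_seqs \<rho>s))"
        using i by (auto simp: first_copy_def mem_omega_seq mem_concat_seqs)
      moreover have "pos_less (first_copy x) (1 # i # p)" by (simp add: first_copy_def)
      ultimately show "pos_less ((g \<circ> first_copy) x) (g (1 # i # p))"
        using g second unfolding seq_emb_via_def comp_def by blast
    qed
    moreover have "g (1 # i # p) \<in> fst (omega_seq (concat_seqs \<tau>s))"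
      using g second unfolding seq_emb_via_def by blast
    ultimately have "seq_emb R \<rho> (concat_seqs \<tau>s)"
      using emb_omega_seq_bounded g_first assms \<rho> by blast
    then show "\<exists>\<tau>\<in>set \<tau>s. seq_emb R \<rho> \<tau>"
      using emb_concat_seqs_into_summand assms \<rho> by blast
  qed
qed (rule seq_emb_omega_concat_seqs)

lemma seq_emb_single_seq_iff: "seq_emb R (single_seq x) \<tau> \<longleftrightarrow> (\<exists>p\<in>fst \<tau>. R x (snd \<tau> p))"
  by (auto simp: seq_emb_def)

lemma seq_emb_single_seq_omega_concat_seqs_iff:
  "seq_emb R (single_seq x) (omega_seq (concat_seqs \<tau>s))
    \<longleftrightarrow> (\<exists>\<tau>\<in>set \<tau>s. seq_emb R (single_seq x) \<tau>)"
  unfolding seq_emb_single_seq_iff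
proof
  assume "\<exists>p\<in>fst (omega_seq (concat_seqs \<tau>s)). R x (snd (omega_seq (concat_seqs \<tau>s)) p)"
  then obtain k q where "k < length \<tau>s" "q \<in> fst (\<tau>s ! k)" "R x (snd (\<tau>s ! k) q)"
    by (auto simp: mem_omega_seq mem_concat_seqs)
  then show "\<exists>\<tau>\<in>set \<tau>s. \<exists>p\<in>fst \<tau>. R x (snd \<tau> p)" by auto
next
  assume "\<exists>\<tau>\<in>set \<tau>s. \<exists>p\<in>fst \<tau>. R x (snd \<tau> p)"
  then obtain k p where "k < length \<tau>s" "p \<in> fst (\<tau>s ! k)" "R x (snd (\<tau>s ! k) p)"
    by (auto simp: in_set_conv_nth)
  then have "0 # k # p \<in> fst (omega_seq (concat_seqs \<tau>s))"
    and "R x (snd (omega_seq (concat_seqs \<tau>s)) (0 # k # p))"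
    by (auto simp: mem_omega_seq mem_concat_seqs)
  then show "\<exists>p\<in>fst (omega_seq (concat_seqs \<tau>s)). R x (snd (omega_seq (concat_seqs \<tau>s)) p)"
    by blast
qed

lemma not_seq_emb_omega_seq_single_seq:
  assumes "fst \<rho> \<noteq> {}"
  shows "\<not> seq_emb R (omega_seq \<rho>) (single_seq y)"
proof
  obtain p where p: "p \<in> fst \<rho>" using assms by auto
  assume "seq_emb R (omega_seq \<rho>) (single_seq y)"
  then obtain g where image: "g ` fst (omega_seq \<rho>) \<subseteq> {[]}"
    and mono: "\<forall>x\<in>fst (omega_seq \<rho>). \<forall>x'\<in>fst (omega_seq \<rho>). pos_less x x' \<longrightarrow> pos_less (g x) (g x')"
    unfolding seq_emb_def by auto
  have "0 # p \<in> fst (omega_seq \<rho>)" "1 # p \<in> fst (omega_seq \<rho>)"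
    using p by (auto simp: mem_omega_seq)
  then have "pos_less (g (0 # p)) (g (1 # p))" and "g (1 # p) = []"
    using mono image by auto
  then show False by simp
qed

lemma tree_seq_nonempty: "wf_tree t \<Longrightarrow> fst (tree_seq t) \<noteq> {}"
  by (induction t) (auto simp: neq_Nil_conv)

lemma indecomposable_tree_seq: "indecomposable (tree_seq t)"
  by (cases t) (simp_all add: indecomposable_single_seq indecomposable_omega_seq)

lemma tree_le_iff_seq_emb:
  "wf_tree \<sigma> \<Longrightarrow> wf_tree \<tau> \<Longrightarrow> tree_le R \<sigma> \<tau> \<longleftrightarrow> seq_emb R (tree_seq \<sigma>) (tree_seq \<tau>)"
proof (induction R \<sigma> \<tau> rule: tree_le.induct)
  case (1 R x y)
  then show ?case by (simp add: seq_emb_single_seq_iff)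
next
  case (2 R x ts)
  then have "\<forall>t\<in>set ts. tree_le R (Leaf x) t \<longleftrightarrow> seq_emb R (single_seq x) (tree_seq t)"
    by simp
  then show ?case by (auto simp: seq_emb_single_seq_omega_concat_seqs_iff)
next
  case (3 R ss ts)
  then have "seq_emb R (tree_seq (Node ss)) (tree_seq (Node ts))
      \<longleftrightarrow> (\<forall>s\<in>set ss. \<exists>t\<in>set ts. seq_emb R (tree_seq s) (tree_seq t))"
    by (simp add: seq_emb_omega_concat_seqs_iff indecomposable_tree_seq tree_seq_nonempty)
  with 3 show ?case by auto
next
  case (4 R ss y)
  then have "fst (concat_seqs (map tree_seq ss)) \<noteq> {}"
    by (auto simp: neq_Nil_conv dest: tree_seq_nonempty)
  then show ?case by (simp add: not_seq_emb_omega_seq_single_seq)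
qed

theorem lemma4p18:
  fixes le :: "'q \<Rightarrow> 'q \<Rightarrow> bool"
  assumes "reflp le" and "transp le"
    and "wf_tree \<sigma>" and "wf_tree \<tau>"
  shows "tree_le le \<sigma> \<tau> \<longleftrightarrow> seq_emb le (tree_seq \<sigma>) (tree_seq \<tau>)"
  using tree_le_iff_seq_emb assms(3,4) .

end
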